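(* Let $\Gamma$ be a typing environment, $\sigma$ a channel state and $P$ a process. If the configuration $\sigma\triangleright P$ is well-typed, $\Gamma\vdash\sigma\triangleright P$, then $\sigma\triangleright P$ has no error reduction, i.e., $\sigma\triangleright P\not\to^{\mathrm{err}}$.
   Context: Syntax (π-calculus with allocation). Channel names $c,d\in\mathcal N$, variables $x,y$, identifiers $u,v$ ranging over both, process variables $X$. Processes: $P,Q ::= u!\langle\vec v\rangle.P \mid u?(\vec x).P \mid \mathbf 0 \mid \mathsf{if}\ u=v\ \mathsf{then}\ P\ \mathsf{else}\ Q \mid \mathsf{rec}\,X.P \mid X \mid P\mid Q \mid (\nu c{:}s)P \mid \mathsf{alloc}\,x.P \mid \mathsf{free}\,u.P$, where $s\in\{\top,\bot\}$ (allocated/deallocated). Input binds $\vec x$, $\mathsf{alloc}$ binds $x$, $(\nu c{:}s)$ binds $c$, $\mathsf{rec}$ binds $X$. A channel state is a finite partial map $\sigma$ from channel names to $\{\top,\bot\}$; a configuration $\sigma\triangleright P$ requires the free names of $P$ to lie in $\mathrm{dom}(\sigma)$; it is closed if $P$ has no free variables. Contexts: $\mathcal C ::= [-]\mid \mathcal C\mid P\mid P\mid\mathcal C\mid (\nu c)\mathcal C$, applied to configurations by $[\sigma\triangleright P]=\sigma\triangleright P$; if $\mathcal C[\sigma\triangleright P]=\sigma'\triangleright P'$ then $(\mathcal C\mid Q)[\sigma\triangleright P]=\sigma'\triangleright(P'\mid Q)$, $(Q\mid\mathcal C)[\sigma\triangleright P]=\sigma'\triangleright(Q\mid P')$; and if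 $\mathcal C[\sigma\triangleright P]=\sigma',c{:}s\triangleright P'$ then $((\nu c)\mathcal C)[\sigma\triangleright P]=\sigma'\triangleright(\nu c{:}s)P'$. $\equiv$ is a standard π-calculus structural equivalence. Error reduction $\to^{\mathrm{err}}$ is the least relation on configurations closed under contexts (if $\sigma\triangleright P\to^{\mathrm{err}}$ then $\mathcal C[\sigma\triangleright P]\to^{\mathrm{err}}$) satisfying: $\sigma\triangleright c!\langle\vec d\rangle.P\mid c?(\vec x).Q\to^{\mathrm{err}}$ if $|\vec d|\ne|\vec x|$; $\sigma\triangleright c!\langle\vec d\rangle.P\to^{\mathrm{err}}$ if $\sigma(c)=\bot$; $\sigma\triangleright c?(\vec x).Q\to^{\mathrm{err}}$ if $\sigma(c)=\bot$; and $\sigma\triangleright P\to^{\mathrm{err}}$ if $P\equiv Q$ and $\sigma\triangleright Q\to^{\mathrm{err}}$. Types: $T::=[T_1,\dots,T_n]^a\mid\mathsf{Proc}$, attributes $a::=\mathsf{aff}\mid\mathsf{un}\mid\bullet_i$ ($i\in\mathbb N$; $\bullet_i$ = unique after $i$ steps). Typing environments are finite multisets of assumptions $u:T$ or $X:\mathsf{Proc}$. Decrement: $\Gamma,u:[\vec T]^{a-1}$ is $\Gamma$ if $a=\mathsf{aff}$, $\Gamma,u:[\vec T]^{\mathsf{un}}$ if $a=\mathsf{un}$, $\Gamma,u:[\vec T]^{\bullet_i}$ if $a=\bullet_{i+1}$. Splitting: $[\vec T]^{\mathsf{un}}=[\vec T]^{\mathsf{un}}\circ[\vec T]^{\mathsf{un}}$,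 $\mathsf{Proc}=\mathsf{Proc}\circ\mathsf{Proc}$, $[\vec T]^{\bullet_i}=[\vec T]^{\mathsf{aff}}\circ[\vec T]^{\bullet_{i+1}}$. Subtyping rules: $\bullet_i\le\bullet_{i+1}$, $\bullet_{i+1}\le\mathsf{un}$, $\mathsf{un}\le\mathsf{aff}$, $[\vec T]^{a_1}\le[\vec T]^{a_2}$ if $a_1\le a_2$. The judgement $\Gamma\vdash P$ is inductively defined by (bound variables fresh, commas denote multiset union): if $\Gamma,u:[\vec T]^{a-1},\vec x:\vec T\vdash P$ then $\Gamma,u:[\vec T]^a\vdash u?(\vec x).P$; if $\Gamma,u:[\vec T]^{a-1}\vdash P$ then $\Gamma,u:[\vec T]^a,\vec v:\vec T\vdash u!\langle\vec v\rangle.P$; if $\Gamma_1\vdash P$ and $\Gamma_2\vdash Q$ then $\Gamma_1,\Gamma_2\vdash P\mid Q$; if $u,v$ occur in $\Gamma$, $\Gamma\vdash P$ and $\Gamma\vdash Q$ then $\Gamma\vdash\mathsf{if}\ u=v\ \mathsf{then}\ P\ \mathsf{else}\ Q$; if $\Gamma^{\mathsf{un}},X:\mathsf{Proc}\vdash P$ then $\Gamma^{\mathsf{un}}\vdash\mathsf{rec}\,X.P$, where $\Gamma^{\mathsf{un}}$ contains only unrestricted assumptions; $X:\mathsf{Proc}\vdash X$; if $\Gamma,x:[\vec T]^{\bullet_0}\vdash P$ then $\Gamma\vdash\mathsf{alloc}\,x.P$; if $\Gamma\vdash P$ then $\Gamma,u:[\vec T]^{\bullet_0}\vdash\mathsf{free}\,u.P$;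 $\emptyset\vdash\mathbf 0$; if $\Gamma,c:T\vdash P$ then $\Gamma\vdash(\nu c{:}\top)P$; if $\Gamma\vdash P$ then $\Gamma\vdash(\nu c{:}\bot)P$; and the structural rules: if $T=T_1\circ T_2$ and $\Gamma,u:T_1,u:T_2\vdash P$ then $\Gamma,u:T\vdash P$; if $\Gamma\vdash P$ then $\Gamma,u:T\vdash P$; if $\Gamma,u:T_2\vdash P$ and $T_1\le T_2$ then $\Gamma,u:T_1\vdash P$; if $\Gamma,u:[\vec T_2]^{\bullet_0}\vdash P$ then $\Gamma,u:[\vec T_1]^{\bullet_0}\vdash P$. Configuration typing: $\Gamma\vdash\sigma\triangleright P$ holds iff $\sigma(c)=\top$ for every channel name $c\in\mathrm{dom}(\Gamma)$, $\Gamma\vdash P$, and $\Gamma$ is a partial function. *)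

theory Defs
  imports Main "HOL-Library.Multiset"
begin

type_synonym name = nat
type_synonym var = nat
type_synonym pvar = nat

datatype ident = Nm name | Vr var

datatype chst = Top | Bot   \<comment> \<open>allocated / deallocated\<close>

datatype proc =
    Out ident "ident list" proc
  | Inp ident "var list" proc
  | Nil
  | Cond ident ident proc proc
  | Rec pvar proc
  | PV pvar
  | Par proc proc
  | Res name chst proc
  | Alloc var proc
  | Free ident proc

type_synonym cstate = "name \<Rightarrow> chst option"

fun idn :: "ident \<Rightarrow> name set" where
  "idn (Nm c) = {c}" | "idn (Vr x) = {}"

fun idv :: "ident \<Rightarrow> var set" where
  "idv (Nm c) = {}" | "idv (Vr x) = {x}"

primrec fn :: "proc \<Rightarrow> name set" where
  "fn (Out u vs P) = idn u \<union> \<Union>(idn ` set vs) \<union> fn P"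
| "fn (Inp u xs P) = idn u \<union> fn P"
| "fn Nil = {}"
| "fn (Cond u v P Q) = idn u \<union> idn v \<union> fn P \<union> fn Q"
| "fn (Rec X P) = fn P"
| "fn (PV X) = {}"
| "fn (Par P Q) = fn P \<union> fn Q"
| "fn (Res c s P) = fn P - {c}"
| "fn (Alloc x P) = fn P"
| "fn (Free u P) = idn u \<union> fn P"

primrec fv :: "proc \<Rightarrow> var set" where
  "fv (Out u vs P) = idv u \<union> \<Union>(idv ` set vs) \<union> fv P"
| "fv (Inp u xs P) = idv u \<union> (fv P - set xs)"
| "fv Nil = {}"
| "fv (Cond u v P Q) = idv u \<union> idv v \<union> fv P \<union> fv Q"
| "fv (Rec X P) = fv P"
| "fv (PV X) = {}"
| "fv (Par P Q) = fv P \<union> fv Q"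
| "fv (Res c s P) = fv P"
| "fv (Alloc x P) = fv P - {x}"
| "fv (Free u P) = idv u \<union> fv P"

primrec fpv :: "proc \<Rightarrow> pvar set" where
  "fpv (Out u vs P) = fpv P"
| "fpv (Inp u xs P) = fpv P"
| "fpv Nil = {}"
| "fpv (Cond u v P Q) = fpv P \<union> fpv Q"
| "fpv (Rec X P) = fpv P - {X}"
| "fpv (PV X) = {X}"
| "fpv (Par P Q) = fpv P \<union> fpv Q"
| "fpv (Res c s P) = fpv P"
| "fpv (Alloc x P) = fpv P"
| "fpv (Free u P) = fpv P"

primrec bn :: "proc \<Rightarrow> name set" where
  "bn (Out u vs P) = bn P"
| "bn (Inp u xs P) = bn P"
| "bn Nil = {}"
| "bn (Cond u v P Q) = bn P \<union> bn Q"
| "bn (Rec X P) = bn P"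
| "bn (PV X) = {}"
| "bn (Par P Q) = bn P \<union> bn Q"
| "bn (Res c s P) = insert c (bn P)"
| "bn (Alloc x P) = bn P"
| "bn (Free u P) = bn P"

primrec bv :: "proc \<Rightarrow> var set" where
  "bv (Out u vs P) = bv P"
| "bv (Inp u xs P) = set xs \<union> bv P"
| "bv Nil = {}"
| "bv (Cond u v P Q) = bv P \<union> bv Q"
| "bv (Rec X P) = bv P"
| "bv (PV X) = {}"
| "bv (Par P Q) = bv P \<union> bv Q"
| "bv (Res c s P) = bv P"
| "bv (Alloc x P) = insert x (bv P)"
| "bv (Free u P) = bv P"

primrec bpv :: "proc \<Rightarrow> pvar set" where
  "bpv (Out u vs P) = bpv P"
| "bpv (Inp u xs P) = bpv P"
| "bpv Nil = {}"
| "bpv (Cond u v P Q) = bpv P \<union> bpv Q"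
| "bpv (Rec X P) = insert X (bpv P)"
| "bpv (PV X) = {}"
| "bpv (Par P Q) = bpv P \<union> bpv Q"
| "bpv (Res c s P) = bpv P"
| "bpv (Alloc x P) = bpv P"
| "bpv (Free u P) = bpv P"

definition rn_id :: "name \<Rightarrow> name \<Rightarrow> ident \<Rightarrow> ident" where
  "rn_id c d u = (if u = Nm c then Nm d else u)"

primrec rn :: "name \<Rightarrow> name \<Rightarrow> proc \<Rightarrow> proc" where
  "rn c d (Out u vs P) = Out (rn_id c d u) (map (rn_id c d) vs) (rn c d P)"
| "rn c d (Inp u xs P) = Inp (rn_id c d u) xs (rn c d P)"
| "rn c d Nil = Nil"
| "rn c d (Cond u v P Q) = Cond (rn_id c d u) (rn_id c d v) (rn c d P) (rn c d Q)"
| "rn c d (Rec X P) = Rec X (rn c d P)"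
| "rn c d (PV X) = PV X"
| "rn c d (Par P Q) = Par (rn c d P) (rn c d Q)"
| "rn c d (Res e s P) = (if e = c then Res e s P else Res e s (rn c d P))"
| "rn c d (Alloc x P) = Alloc x (rn c d P)"
| "rn c d (Free u P) = Free (rn_id c d u) (rn c d P)"

fun rv_id :: "(var \<Rightarrow> var) \<Rightarrow> ident \<Rightarrow> ident" where
  "rv_id \<rho> (Vr x) = Vr (\<rho> x)" | "rv_id \<rho> (Nm c) = Nm c"

primrec rv :: "(var \<Rightarrow> var) \<Rightarrow> proc \<Rightarrow> proc" where
  "rv \<rho> (Out u vs P) = Out (rv_id \<rho> u) (map (rv_id \<rho>) vs) (rv \<rho> P)"
| "rv \<rho> (Inp u xs P) = Inp (rv_id \<rho> u) xs (rv (\<lambda>z. if z \<in> set xs then z else \<rho> z) P)"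
| "rv \<rho> Nil = Nil"
| "rv \<rho> (Cond u v P Q) = Cond (rv_id \<rho> u) (rv_id \<rho> v) (rv \<rho> P) (rv \<rho> Q)"
| "rv \<rho> (Rec X P) = Rec X (rv \<rho> P)"
| "rv \<rho> (PV X) = PV X"
| "rv \<rho> (Par P Q) = Par (rv \<rho> P) (rv \<rho> Q)"
| "rv \<rho> (Res c s P) = Res c s (rv \<rho> P)"
| "rv \<rho> (Alloc x P) = Alloc x (rv (\<lambda>z. if z = x then z else \<rho> z) P)"
| "rv \<rho> (Free u P) = Free (rv_id \<rho> u) (rv \<rho> P)"

primrec rpv :: "pvar \<Rightarrow> pvar \<Rightarrow> proc \<Rightarrow> proc" where
  "rpv X Y (Out u vs P) = Out u vs (rpv X Y P)"
| "rpv X Y (Inp u xs P) = Inp u xs (rpv X Y P)"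
| "rpv X Y Nil = Nil"
| "rpv X Y (Cond u v P Q) = Cond u v (rpv X Y P) (rpv X Y Q)"
| "rpv X Y (Rec Z P) = (if Z = X then Rec Z P else Rec Z (rpv X Y P))"
| "rpv X Y (PV Z) = (if Z = X then PV Y else PV Z)"
| "rpv X Y (Par P Q) = Par (rpv X Y P) (rpv X Y Q)"
| "rpv X Y (Res c s P) = Res c s (rpv X Y P)"
| "rpv X Y (Alloc x P) = Alloc x (rpv X Y P)"
| "rpv X Y (Free u P) = Free u (rpv X Y P)"

primrec psub :: "pvar \<Rightarrow> proc \<Rightarrow> proc \<Rightarrow> proc" where
  "psub X R (Out u vs P) = Out u vs (psub X R P)"
| "psub X R (Inp u xs P) = Inp u xs (psub X R P)"
| "psub X R Nil = Nil"
| "psub X R (Cond u v P Q) = Cond u v (psub X R P) (psub X R Q)"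
| "psub X R (Rec Z P) = (if Z = X then Rec Z P else Rec Z (psub X R P))"
| "psub X R (PV Z) = (if Z = X then R else PV Z)"
| "psub X R (Par P Q) = Par (psub X R P) (psub X R Q)"
| "psub X R (Res c s P) = Res c s (psub X R P)"
| "psub X R (Alloc x P) = Alloc x (psub X R P)"
| "psub X R (Free u P) = Free u (psub X R P)"

definition allnames :: "proc \<Rightarrow> name set" where "allnames P = fn P \<union> bn P"
definition allvars :: "proc \<Rightarrow> var set" where "allvars P = fv P \<union> bv P"
definition allpvars :: "proc \<Rightarrow> pvar set" where "allpvars P = fpv P \<union> bpv P"

inductive seq :: "proc \<Rightarrow> proc \<Rightarrow> bool" (infix "\<equiv>\<^sub>s" 50) where
  s_refl: "P \<equiv>\<^sub>s P"
| s_sym: "P \<equiv>\<^sub>s Q \<Longrightarrow> Q \<equiv>\<^sub>s P"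
| s_trans: "P \<equiv>\<^sub>s Q \<Longrightarrow> Q \<equiv>\<^sub>s R \<Longrightarrow> P \<equiv>\<^sub>s R"
| c_out: "P \<equiv>\<^sub>s Q \<Longrightarrow> Out u vs P \<equiv>\<^sub>s Out u vs Q"
| c_inp: "P \<equiv>\<^sub>s Q \<Longrightarrow> Inp u xs P \<equiv>\<^sub>s Inp u xs Q"
| c_cond: "P \<equiv>\<^sub>s P' \<Longrightarrow> Q \<equiv>\<^sub>s Q' \<Longrightarrow> Cond u v P Q \<equiv>\<^sub>s Cond u v P' Q'"
| c_rec: "P \<equiv>\<^sub>s Q \<Longrightarrow> Rec X P \<equiv>\<^sub>s Rec X Q"
| c_par: "P \<equiv>\<^sub>s P' \<Longrightarrow> Q \<equiv>\<^sub>s Q' \<Longrightarrow> Par P Q \<equiv>\<^sub>s Par P' Q'"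
| c_res: "P \<equiv>\<^sub>s Q \<Longrightarrow> Res c s P \<equiv>\<^sub>s Res c s Q"
| c_alloc: "P \<equiv>\<^sub>s Q \<Longrightarrow> Alloc x P \<equiv>\<^sub>s Alloc x Q"
| c_free: "P \<equiv>\<^sub>s Q \<Longrightarrow> Free u P \<equiv>\<^sub>s Free u Q"
| par_nil: "Par P Nil \<equiv>\<^sub>s P"
| par_comm: "Par P Q \<equiv>\<^sub>s Par Q P"
| par_assoc: "Par (Par P Q) R \<equiv>\<^sub>s Par P (Par Q R)"
| res_nil: "Res c s Nil \<equiv>\<^sub>s Nil"
| res_swap: "c \<noteq> d \<Longrightarrow> Res c s (Res d t P) \<equiv>\<^sub>s Res d t (Res c s P)"
| res_extr: "c \<notin> fn Q \<Longrightarrow> Par (Res c s P) Q \<equiv>\<^sub>s Res c s (Par P Q)"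
| alpha_res: "d \<notin> allnames P \<Longrightarrow> Res c s P \<equiv>\<^sub>s Res d s (rn c d P)"
| alpha_inp: "length ys = length xs \<Longrightarrow> distinct ys \<Longrightarrow> set ys \<inter> allvars P = {} \<Longrightarrow>
     Inp u xs P \<equiv>\<^sub>s Inp u ys (rv (\<lambda>z. case map_of (zip xs ys) z of Some y \<Rightarrow> y | None \<Rightarrow> z) P)"
| alpha_alloc: "y \<notin> allvars P \<Longrightarrow> Alloc x P \<equiv>\<^sub>s Alloc y (rv (\<lambda>z. if z = x then y else z) P)"
| alpha_rec: "Y \<notin> allpvars P \<Longrightarrow> Rec X P \<equiv>\<^sub>s Rec Y (rpv X Y P)"
| rec_unfold: "bn P \<inter> fn (Rec X P) = {} \<Longrightarrow> bv P \<inter> fv (Rec X P) = {} \<Longrightarrow>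
     bpv P \<inter> fpv (Rec X P) = {} \<Longrightarrow> Rec X P \<equiv>\<^sub>s psub X (Rec X P) P"

inductive err :: "cstate \<Rightarrow> proc \<Rightarrow> bool" where
  err_arity: "\<forall>v\<in>set ds. \<exists>d. v = Nm d \<Longrightarrow> length ds \<noteq> length xs \<Longrightarrow>
     err \<sigma> (Par (Out (Nm c) ds P) (Inp (Nm c) xs Q))"
| err_out: "\<forall>v\<in>set ds. \<exists>d. v = Nm d \<Longrightarrow> \<sigma> c = Some Bot \<Longrightarrow> err \<sigma> (Out (Nm c) ds P)"
| err_inp: "\<sigma> c = Some Bot \<Longrightarrow> err \<sigma> (Inp (Nm c) xs Q)"
| err_struct: "P \<equiv>\<^sub>s Q \<Longrightarrow> err \<sigma> Q \<Longrightarrow> err \<sigma> P"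
| err_parL: "err \<sigma> P \<Longrightarrow> err \<sigma> (Par P Q)"
| err_parR: "err \<sigma> P \<Longrightarrow> err \<sigma> (Par Q P)"
| err_res: "c \<notin> dom \<sigma> \<Longrightarrow> err (\<sigma>(c \<mapsto> s)) P \<Longrightarrow> err \<sigma> (Res c s P)"

definition config :: "cstate \<Rightarrow> proc \<Rightarrow> bool" where
  "config \<sigma> P \<longleftrightarrow> finite (dom \<sigma>) \<and> fn P \<subseteq> dom \<sigma>"

datatype attr = Aff | UnR | Uq nat   \<comment> \<open>aff, un, unique-after-i-steps\<close>

datatype ty = Ch "ty list" attr | Proc

datatype subj = SI ident | SP pvar

type_synonym env = "(subj \<times> ty) multiset"

definition subjects :: "env \<Rightarrow> subj set" where
  "subjects \<Gamma> = fst ` set_mset \<Gamma>"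

text \<open>Decrement: decr u Ts a D means  (u:[Ts]^(a-1)) = D  (as an environment part).\<close>
inductive decr :: "ident \<Rightarrow> ty list \<Rightarrow> attr \<Rightarrow> env \<Rightarrow> bool" where
  "decr u Ts Aff {#}"
| "decr u Ts UnR {#(SI u, Ch Ts UnR)#}"
| "decr u Ts (Uq (Suc i)) {#(SI u, Ch Ts (Uq i))#}"

inductive split :: "ty \<Rightarrow> ty \<Rightarrow> ty \<Rightarrow> bool" where
  "split (Ch Ts UnR) (Ch Ts UnR) (Ch Ts UnR)"
| "split Proc Proc Proc"
| "split (Ch Ts (Uq i)) (Ch Ts Aff) (Ch Ts (Uq (Suc i)))"

inductive attr_le :: "attr \<Rightarrow> attr \<Rightarrow> bool" where
  "attr_le (Uq i) (Uq (Suc i))"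
| "attr_le (Uq (Suc i)) UnR"
| "attr_le UnR Aff"

inductive ty_le :: "ty \<Rightarrow> ty \<Rightarrow> bool" where
  "attr_le a1 a2 \<Longrightarrow> ty_le (Ch Ts a1) (Ch Ts a2)"

fun unr :: "ty \<Rightarrow> bool" where
  "unr (Ch Ts a) = (a = UnR)" | "unr Proc = True"

inductive typed :: "env \<Rightarrow> proc \<Rightarrow> bool" (infix "\<turnstile>" 40) where
  t_inp: "decr u Ts a D \<Longrightarrow> length xs = length Ts \<Longrightarrow> distinct xs \<Longrightarrow>
     (\<forall>x\<in>set xs. SI (Vr x) \<notin> subjects (\<Gamma> + {#(SI u, Ch Ts a)#})) \<Longrightarrow>
     \<Gamma> + D + mset (zip (map (\<lambda>x. SI (Vr x)) xs) Ts) \<turnstile> P \<Longrightarrow>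
     \<Gamma> + {#(SI u, Ch Ts a)#} \<turnstile> Inp u xs P"
| t_out: "decr u Ts a D \<Longrightarrow> length vs = length Ts \<Longrightarrow> \<Gamma> + D \<turnstile> P \<Longrightarrow>
     \<Gamma> + {#(SI u, Ch Ts a)#} + mset (zip (map SI vs) Ts) \<turnstile> Out u vs P"
| t_par: "\<Gamma>1 \<turnstile> P \<Longrightarrow> \<Gamma>2 \<turnstile> Q \<Longrightarrow> \<Gamma>1 + \<Gamma>2 \<turnstile> Par P Q"
| t_cond: "SI u \<in> subjects \<Gamma> \<Longrightarrow> SI v \<in> subjects \<Gamma> \<Longrightarrow> \<Gamma> \<turnstile> P \<Longrightarrow> \<Gamma> \<turnstile> Q \<Longrightarrow>
     \<Gamma> \<turnstile> Cond u v P Q"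
| t_rec: "\<forall>a\<in>#\<Gamma>. unr (snd a) \<Longrightarrow> SP X \<notin> subjects \<Gamma> \<Longrightarrow>
     \<Gamma> + {#(SP X, Proc)#} \<turnstile> P \<Longrightarrow> \<Gamma> \<turnstile> Rec X P"
| t_var: "{#(SP X, Proc)#} \<turnstile> PV X"
| t_alloc: "SI (Vr x) \<notin> subjects \<Gamma> \<Longrightarrow> \<Gamma> + {#(SI (Vr x), Ch Ts (Uq 0))#} \<turnstile> P \<Longrightarrow>
     \<Gamma> \<turnstile> Alloc x P"
| t_free: "\<Gamma> \<turnstile> P \<Longrightarrow> \<Gamma> + {#(SI u, Ch Ts (Uq 0))#} \<turnstile> Free u P"
| t_nil: "{#} \<turnstile> Nil"
| t_res_top: "SI (Nm c) \<notin> subjects \<Gamma> \<Longrightarrow> \<Gamma> + {#(SI (Nm c), T)#} \<turnstile> P \<Longrightarrow>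
     \<Gamma> \<turnstile> Res c Top P"
| t_res_bot: "SI (Nm c) \<notin> subjects \<Gamma> \<Longrightarrow> \<Gamma> \<turnstile> P \<Longrightarrow> \<Gamma> \<turnstile> Res c Bot P"
| t_split: "split T T1 T2 \<Longrightarrow> \<Gamma> + {#(w, T1), (w, T2)#} \<turnstile> P \<Longrightarrow> \<Gamma> + {#(w, T)#} \<turnstile> P"
| t_weak: "\<Gamma> \<turnstile> P \<Longrightarrow> \<Gamma> + {#(w, T)#} \<turnstile> P"
| t_sub: "\<Gamma> + {#(w, T2)#} \<turnstile> P \<Longrightarrow> ty_le T1 T2 \<Longrightarrow> \<Gamma> + {#(w, T1)#} \<turnstile> P"
| t_uq0: "\<Gamma> + {#(w, Ch Ts2 (Uq 0))#} \<turnstile> P \<Longrightarrow> \<Gamma> + {#(w, Ch Ts1 (Uq 0))#} \<turnstile> P"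

definition partial_env :: "env \<Rightarrow> bool" where
  "partial_env \<Gamma> \<longleftrightarrow> (\<forall>w. size (filter_mset (\<lambda>a. fst a = w) \<Gamma>) \<le> 1)"

definition ctyped :: "env \<Rightarrow> cstate \<Rightarrow> proc \<Rightarrow> bool" where
  "ctyped \<Gamma> \<sigma> P \<longleftrightarrow> (\<forall>c. SI (Nm c) \<in> subjects \<Gamma> \<longrightarrow> \<sigma> c = Some Top) \<and> \<Gamma> \<turnstile> P \<and> partial_env \<Gamma>"

end

theory Submission
  imports Defs
begin

text \<open>
  An error redex is an unguarded prefix on a deallocated channel, or an unguarded output and
  input on the same channel with different arities. The predicate \<open>safe \<sigma> \<alpha> P\<close> says that every
  unguarded prefix on a name \<open>c\<close> acts on an allocated channel at the fixed arity \<open>\<alpha> c\<close>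
  (restricted names get some arity of their own). It is invariant under structural equivalence and
  rules out every error redex, so it suffices that typing implies safety.

  This is shown by induction on the typing derivation, for every state and arity assignment that
  agree with the environment. The one subtlety is rule \<open>t_uq0\<close>, which may change the payload
  types of a channel that is unique after 0 steps; the arities of such channels must therefore be
  allowed to change. This is harmless because such a channel has a single assumption in the
  environment (a property implied by partiality and preserved by the typing rules), so in a
  parallel composition only one side can mention it.
\<close>

fun safe :: "cstate \<Rightarrow> (name \<Rightarrow> nat) \<Rightarrow> proc \<Rightarrow> bool" where
  "safe \<sigma> \<alpha> (Out u vs P) = (\<forall>c. u = Nm c \<longrightarrow> \<sigma> c = Some Top \<and> \<alpha> c = length vs)"
| "safe \<sigma> \<alpha> (Inp u xs P) = (\<forall>c. u = Nm c \<longrightarrow> \<sigma> c = Some Top \<and> \<alpha> c = length xs)"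
| "safe \<sigma> \<alpha> Nil = True"
| "safe \<sigma> \<alpha> (Cond u v P Q) = True"
| "safe \<sigma> \<alpha> (Rec X P) = safe \<sigma> \<alpha> P"
| "safe \<sigma> \<alpha> (PV X) = True"
| "safe \<sigma> \<alpha> (Par P Q) = (safe \<sigma> \<alpha> P \<and> safe \<sigma> \<alpha> Q)"
| "safe \<sigma> \<alpha> (Res c s P) = (\<exists>n. safe (\<sigma>(c \<mapsto> s)) (\<alpha>(c := n)) P)"
| "safe \<sigma> \<alpha> (Alloc x P) = True"
| "safe \<sigma> \<alpha> (Free u P) = True"

lemma safe_cong:
  assumes "\<forall>c\<in>fn P. \<sigma>1 c = \<sigma>2 c \<and> \<alpha>1 c = \<alpha>2 c"
  shows "safe \<sigma>1 \<alpha>1 P = safe \<sigma>2 \<alpha>2 P"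
  using assms
proof (induction P arbitrary: \<sigma>1 \<sigma>2 \<alpha>1 \<alpha>2)
  case (Par P Q)
  from Par.prems have "\<forall>c\<in>fn P. \<sigma>1 c = \<sigma>2 c \<and> \<alpha>1 c = \<alpha>2 c"
    and "\<forall>c\<in>fn Q. \<sigma>1 c = \<sigma>2 c \<and> \<alpha>1 c = \<alpha>2 c" by auto
  then have "safe \<sigma>1 \<alpha>1 P = safe \<sigma>2 \<alpha>2 P" "safe \<sigma>1 \<alpha>1 Q = safe \<sigma>2 \<alpha>2 Q"
    by (simp_all add: Par.IH)
  then show ?case by simp
next
  case (Res c s P)
  have "safe (\<sigma>1(c \<mapsto> s)) (\<alpha>1(c := n)) P = safe (\<sigma>2(c \<mapsto> s)) (\<alpha>2(c := n)) P" for n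
    by (rule Res.IH) (use Res.prems in auto)
  then show ?case by simp
qed auto

lemma safe_update_fresh:
  "c \<notin> fn P \<Longrightarrow> safe (\<sigma>(c \<mapsto> s)) (\<alpha>(c := n)) P = safe \<sigma> \<alpha> P"
  by (rule safe_cong) auto

lemma safe_rn:
  "d \<notin> allnames P \<Longrightarrow>
   safe (\<sigma>(d \<mapsto> s)) (\<alpha>(d := n)) (rn c d P) = safe (\<sigma>(c \<mapsto> s)) (\<alpha>(c := n)) P"
proof (induction P arbitrary: \<sigma> \<alpha>)
  case (Res e t P)
  show ?case
  proof (cases "e = c")
    case True
    with Res.prems have "safe (\<sigma>(d \<mapsto> s)) (\<alpha>(d := n)) (Res c t P)
        = safe (\<sigma>(c \<mapsto> s)) (\<alpha>(c := n)) (Res c t P)"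
      by (intro safe_cong) (auto simp: allnames_def)
    moreover from True have "rn c d (Res e t P) = Res c t P" by simp
    ultimately show ?thesis using True by (simp only:)
  next
    case False
    with Res.prems have "e \<noteq> d" and fresh: "d \<notin> allnames P" by (auto simp: allnames_def)
    have "safe (\<sigma>(d \<mapsto> s, e \<mapsto> t)) (\<alpha>(d := n, e := m)) (rn c d P)
        = safe (\<sigma>(c \<mapsto> s, e \<mapsto> t)) (\<alpha>(c := n, e := m)) P" for m
      using Res.IH[OF fresh, of "\<sigma>(e \<mapsto> t)" "\<alpha>(e := m)"] False \<open>e \<noteq> d\<close>
      by (metis fun_upd_twist)
    moreover from False have "rn c d (Res e t P) = Res e t (rn c d P)" by simp
    ultimately show ?thesis by (simp only: safe.simps)
  qed
qed (auto simp: rn_id_def allnames_def)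

lemma safe_rpv: "safe \<sigma> \<alpha> (rpv X Y P) = safe \<sigma> \<alpha> P"
  by (induction P arbitrary: \<sigma> \<alpha>) auto

lemma safe_psub_imp: "safe \<sigma> \<alpha> (psub X R P) \<Longrightarrow> safe \<sigma> \<alpha> P"
  by (induction P arbitrary: \<sigma> \<alpha>) (auto split: if_splits)

lemma safe_psub:
  "safe \<sigma> \<alpha> R \<Longrightarrow> safe \<sigma> \<alpha> P \<Longrightarrow> bn P \<inter> fn R = {} \<Longrightarrow> safe \<sigma> \<alpha> (psub X R P)"
proof (induction P arbitrary: \<sigma> \<alpha>)
  case (Res c s P)
  then obtain n where "safe (\<sigma>(c \<mapsto> s)) (\<alpha>(c := n)) P" by auto
  moreover have "safe (\<sigma>(c \<mapsto> s)) (\<alpha>(c := n)) R"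
    using Res.prems by (simp add: safe_update_fresh)
  ultimately show ?case using Res by auto
qed (auto simp: Int_Un_distrib2)

lemma safe_struct_eq: "P \<equiv>\<^sub>s Q \<Longrightarrow> safe \<sigma> \<alpha> P = safe \<sigma> \<alpha> Q"
proof (induction arbitrary: \<sigma> \<alpha> rule: seq.induct)
  case (res_extr c Q s P)
  then show ?case by (simp add: safe_update_fresh)
next
  case (alpha_res d P c s)
  then show ?case by (simp add: safe_rn)
next
  case (alpha_rec Y P X)
  then show ?case by (simp add: safe_rpv)
next
  case (rec_unfold P X)
  then show ?case using safe_psub[of \<sigma> \<alpha> "Rec X P" P X] safe_psub_imp by auto
next
  case (res_swap c d s t P)
  then show ?case by (auto simp: fun_upd_twist)
qed auto

lemma err_not_safe: "err \<sigma> P \<Longrightarrow> \<not> safe \<sigma> \<alpha> P"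
proof (induction arbitrary: \<alpha> rule: err.induct)
  case (err_struct P Q \<sigma>)
  then show ?case by (simp add: safe_struct_eq)
qed auto

lemma subjects_add [simp]: "subjects (A + B) = subjects A \<union> subjects B"
  by (simp add: subjects_def image_Un)

lemma subjects_add_mset [simp]: "subjects (add_mset a M) = insert (fst a) (subjects M)"
  by (simp add: subjects_def)

lemma subjects_empty [simp]: "subjects {#} = {}"
  by (simp add: subjects_def)

lemma subjects_mset_zip: "subjects (mset (zip us Ts)) \<subseteq> set us"
  by (auto simp: subjects_def dest: set_zip_leftD)

lemma subjects_mset_zip_eq:
  "length us = length Ts \<Longrightarrow> subjects (mset (zip us Ts)) = set us"
  by (metis subjects_def map_fst_zip set_map set_mset_mset)

lemma decr_subjects: "decr u Ts a D \<Longrightarrow> subjects D \<subseteq> {SI u}"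
  by (induction rule: decr.induct) auto

lemma idn_iff [simp]: "c \<in> idn u \<longleftrightarrow> u = Nm c"
  by (cases u) auto

lemma typed_fn_subjects: "\<Gamma> \<turnstile> P \<Longrightarrow> c \<in> fn P \<Longrightarrow> SI (Nm c) \<in> subjects \<Gamma>"
proof (induction arbitrary: c rule: typed.induct)
  case (t_inp u Ts a D xs \<Gamma> P)
  then show ?case
    using decr_subjects[OF t_inp.hyps(1)] subjects_mset_zip[of "map (\<lambda>x. SI (Vr x)) xs" Ts]
    by (cases "u = Nm c") auto
next
  case (t_out u Ts a D vs \<Gamma> P)
  then show ?case
    using decr_subjects[OF t_out.hyps(1)] subjects_mset_zip_eq[of "map SI vs" Ts]
    by (cases "c \<in> fn P") auto
qed (auto split: if_splits)

fun arity :: "ty \<Rightarrow> nat" where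
  "arity (Ch Ts a) = length Ts"
| "arity Proc = 0"

fun is_uq0 :: "ty \<Rightarrow> bool" where
  "is_uq0 (Ch Ts a) = (a = Uq 0)"
| "is_uq0 Proc = False"

definition uq0_exclusive :: "env \<Rightarrow> bool" where
  "uq0_exclusive \<Gamma> \<longleftrightarrow> (\<forall>c T. (SI (Nm c), T) \<in># \<Gamma> \<longrightarrow> is_uq0 T \<longrightarrow>
      SI (Nm c) \<notin> subjects (\<Gamma> - {#(SI (Nm c), T)#}))"

lemma uq0_exclusiveI:
  "(\<And>c T. (SI (Nm c), T) \<in># \<Gamma> \<Longrightarrow> is_uq0 T \<Longrightarrow> SI (Nm c) \<notin> subjects (\<Gamma> - {#(SI (Nm c), T)#}))
   \<Longrightarrow> uq0_exclusive \<Gamma>"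
  by (simp add: uq0_exclusive_def)

lemma uq0_exclusiveD:
  "uq0_exclusive \<Gamma> \<Longrightarrow> (SI (Nm c), T) \<in># \<Gamma> \<Longrightarrow> is_uq0 T \<Longrightarrow> SI (Nm c) \<notin> subjects (\<Gamma> - {#(SI (Nm c), T)#})"
  by (simp add: uq0_exclusive_def)

lemma uq0_exclusive_disjoint:
  assumes "uq0_exclusive (A + B)" "(SI (Nm c), T) \<in># B" "is_uq0 T"
  shows "SI (Nm c) \<notin> subjects A"
proof -
  have "SI (Nm c) \<notin> subjects (A + B - {#(SI (Nm c), T)#})"
    using uq0_exclusiveD[OF assms(1), of c T] assms(2,3) by simp
  then show ?thesis by (simp add: diff_union_single_conv[OF assms(2)])
qed

lemma uq0_exclusive_mono:
  assumes "uq0_exclusive (A + B)"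
  shows "uq0_exclusive A"
proof (rule uq0_exclusiveI)
  fix c T
  assume m: "(SI (Nm c), T) \<in># A" and "is_uq0 T"
  then have "SI (Nm c) \<notin> subjects (A + B - {#(SI (Nm c), T)#})"
    using uq0_exclusiveD[OF assms, of c T] by simp
  then show "SI (Nm c) \<notin> subjects (A - {#(SI (Nm c), T)#})"
    using diff_union_single_conv[OF m, of B] by (simp add: add.commute)
qed

lemma uq0_exclusive_add:
  assumes "uq0_exclusive \<Gamma>" "\<And>c. w = SI (Nm c) \<Longrightarrow> w \<notin> subjects \<Gamma>"
  shows "uq0_exclusive (add_mset (w, T) \<Gamma>)"
proof (rule uq0_exclusiveI)
  fix c T'
  assume m: "(SI (Nm c), T') \<in># add_mset (w, T) \<Gamma>" and u: "is_uq0 T'"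
  show "SI (Nm c) \<notin> subjects (add_mset (w, T) \<Gamma> - {#(SI (Nm c), T')#})"
  proof (cases "w = SI (Nm c)")
    case True
    with m assms(2) have "(SI (Nm c), T') = (w, T)" by (force simp: subjects_def)
    with True assms(2) show ?thesis by simp
  next
    case False
    with m have "(SI (Nm c), T') \<in># \<Gamma>" by auto
    with False uq0_exclusiveD[OF assms(1) _ u] show ?thesis by simp
  qed
qed

lemma uq0_exclusive_replace:
  assumes ex: "uq0_exclusive (add_mset (w, T) \<Gamma>)" and N: "\<forall>x\<in>#N. fst x = w \<and> \<not> is_uq0 (snd x)"
  shows "uq0_exclusive (N + \<Gamma>)"
proof (rule uq0_exclusiveI)
  fix c T'
  assume m: "(SI (Nm c), T') \<in># N + \<Gamma>" and u: "is_uq0 T'"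
  have m': "(SI (Nm c), T') \<in># \<Gamma>" using m N u by force
  then have "SI (Nm c) \<notin> subjects (add_mset (w, T) \<Gamma> - {#(SI (Nm c), T')#})"
    using uq0_exclusiveD[OF ex, of c T'] u by simp
  then have "SI (Nm c) \<noteq> w" "SI (Nm c) \<notin> subjects (\<Gamma> - {#(SI (Nm c), T')#})"
    using m' by simp_all
  moreover have "subjects N \<subseteq> {w}" using N by (auto simp: subjects_def)
  ultimately show "SI (Nm c) \<notin> subjects (N + \<Gamma> - {#(SI (Nm c), T')#})"
    by (auto simp: diff_union_single_conv[OF m'])
qed

lemma partial_env_uq0_exclusive: "partial_env \<Gamma> \<Longrightarrow> uq0_exclusive \<Gamma>"
proof (rule uq0_exclusiveI)
  fix c T
  assume p: "partial_env \<Gamma>" and "(SI (Nm c), T) \<in># \<Gamma>"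
  then obtain \<Delta> where \<Gamma>: "\<Gamma> = add_mset (SI (Nm c), T) \<Delta>" by (metis multi_member_split)
  have "size {#a \<in># \<Gamma>. fst a = SI (Nm c)#} \<le> 1"
    using p unfolding partial_env_def by blast
  then have "{#a \<in># \<Delta>. fst a = SI (Nm c)#} = {#}" by (simp add: \<Gamma>)
  then show "SI (Nm c) \<notin> subjects (\<Gamma> - {#(SI (Nm c), T)#})"
    by (auto simp: \<Gamma> subjects_def)
qed

definition env_fits :: "cstate \<Rightarrow> (name \<Rightarrow> nat) \<Rightarrow> env \<Rightarrow> bool" where
  "env_fits \<sigma> \<alpha> \<Gamma> \<longleftrightarrow> (\<forall>c T. (SI (Nm c), T) \<in># \<Gamma> \<longrightarrow> \<sigma> c = Some Top \<and> \<alpha> c = arity T)"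

definition uq0_names :: "env \<Rightarrow> name set" where
  "uq0_names \<Gamma> = {c. \<exists>T. (SI (Nm c), T) \<in># \<Gamma> \<and> is_uq0 T}"

definition safe_under :: "env \<Rightarrow> proc \<Rightarrow> bool" where
  "safe_under \<Gamma> P \<longleftrightarrow> (\<forall>\<sigma> \<alpha>. uq0_exclusive \<Gamma> \<longrightarrow> env_fits \<sigma> \<alpha> \<Gamma> \<longrightarrow>
      (\<exists>\<alpha>'. (\<forall>c. c \<notin> uq0_names \<Gamma> \<longrightarrow> \<alpha>' c = \<alpha> c) \<and> safe \<sigma> \<alpha>' P))"

lemma uq0_names_add [simp]: "uq0_names (A + B) = uq0_names A \<union> uq0_names B"
  by (auto simp: uq0_names_def)

lemma uq0_names_add_mset [simp]:
  "uq0_names (add_mset (w, T) \<Gamma>) = {c. w = SI (Nm c) \<and> is_uq0 T} \<union> uq0_names \<Gamma>"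
  by (auto simp: uq0_names_def)

lemma safe_underI:
  "(\<And>\<sigma> \<alpha>. uq0_exclusive \<Gamma> \<Longrightarrow> env_fits \<sigma> \<alpha> \<Gamma> \<Longrightarrow>
     \<exists>\<alpha>'. (\<forall>c. c \<notin> uq0_names \<Gamma> \<longrightarrow> \<alpha>' c = \<alpha> c) \<and> safe \<sigma> \<alpha>' P)
   \<Longrightarrow> safe_under \<Gamma> P"
  by (simp add: safe_under_def)

lemma safe_underE:
  assumes "safe_under \<Gamma> P" "uq0_exclusive \<Gamma>" "env_fits \<sigma> \<alpha> \<Gamma>"
  obtains \<alpha>' where "\<forall>c. c \<notin> uq0_names \<Gamma> \<longrightarrow> \<alpha>' c = \<alpha> c" "safe \<sigma> \<alpha>' P"
  using assms unfolding safe_under_def by blast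

lemma safe_under_of_safe: "(\<And>\<sigma> \<alpha>. env_fits \<sigma> \<alpha> \<Gamma> \<Longrightarrow> safe \<sigma> \<alpha> P) \<Longrightarrow> safe_under \<Gamma> P"
  by (auto intro!: safe_underI)

lemma safe_under_mono:
  assumes "safe_under \<Delta> P" "uq0_names \<Delta> \<subseteq> uq0_names \<Gamma>"
    "\<And>\<sigma> \<alpha>. uq0_exclusive \<Gamma> \<Longrightarrow> env_fits \<sigma> \<alpha> \<Gamma> \<Longrightarrow> uq0_exclusive \<Delta> \<and> env_fits \<sigma> \<alpha> \<Delta>"
  shows "safe_under \<Gamma> P"
proof (rule safe_underI)
  fix \<sigma> \<alpha>
  assume "uq0_exclusive \<Gamma>" "env_fits \<sigma> \<alpha> \<Gamma>"
  with assms(3) have "uq0_exclusive \<Delta>" "env_fits \<sigma> \<alpha> \<Delta>" by simp_all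
  then obtain \<alpha>' where "\<forall>c. c \<notin> uq0_names \<Delta> \<longrightarrow> \<alpha>' c = \<alpha> c" "safe \<sigma> \<alpha>' P"
    by (rule safe_underE[OF assms(1)])
  with assms(2) show "\<exists>\<alpha>'. (\<forall>c. c \<notin> uq0_names \<Gamma> \<longrightarrow> \<alpha>' c = \<alpha> c) \<and> safe \<sigma> \<alpha>' P" by blast
qed

lemma env_fits_mono: "env_fits \<sigma> \<alpha> \<Gamma> \<Longrightarrow> set_mset \<Delta> \<subseteq> set_mset \<Gamma> \<Longrightarrow> env_fits \<sigma> \<alpha> \<Delta>"
  unfolding env_fits_def by blast

lemma env_fits_add_fresh:
  "env_fits \<sigma> \<alpha> \<Gamma> \<Longrightarrow> SI (Nm c) \<notin> subjects \<Gamma> \<Longrightarrow>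
   env_fits (\<sigma>(c \<mapsto> Top)) (\<alpha>(c := arity T)) (add_mset (SI (Nm c), T) \<Gamma>)"
  unfolding env_fits_def by (force simp: subjects_def)

lemma safe_under_weaken: "safe_under \<Gamma> P \<Longrightarrow> safe_under (add_mset x \<Gamma>) P"
  by (erule safe_under_mono)
    (use uq0_exclusive_mono[of \<Gamma> "{#x#}"] in \<open>auto simp: uq0_names_def env_fits_def\<close>)

lemma safe_under_replace:
  assumes "safe_under (N + \<Gamma>) P"
    and N: "\<forall>x\<in>#N. fst x = w \<and> \<not> is_uq0 (snd x) \<and> arity (snd x) = arity T"
  shows "safe_under (add_mset (w, T) \<Gamma>) P"
proof (rule safe_under_mono[OF assms(1)])
  show "uq0_names (N + \<Gamma>) \<subseteq> uq0_names (add_mset (w, T) \<Gamma>)"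
    using N by (auto simp: uq0_names_def)
  fix \<sigma> \<alpha>
  assume ex: "uq0_exclusive (add_mset (w, T) \<Gamma>)" and fits: "env_fits \<sigma> \<alpha> (add_mset (w, T) \<Gamma>)"
  show "uq0_exclusive (N + \<Gamma>) \<and> env_fits \<sigma> \<alpha> (N + \<Gamma>)"
    using uq0_exclusive_replace[OF ex] fits N unfolding env_fits_def by fastforce
qed

lemma safe_under_rec: "safe_under (add_mset (SP X, Proc) \<Gamma>) P \<Longrightarrow> safe_under \<Gamma> (Rec X P)"
  unfolding safe_under_def
  by (auto intro: uq0_exclusive_add simp: env_fits_def)

lemma safe_under_par:
  assumes "\<Gamma>1 \<turnstile> P" "\<Gamma>2 \<turnstile> Q" "safe_under \<Gamma>1 P" "safe_under \<Gamma>2 Q"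
  shows "safe_under (\<Gamma>1 + \<Gamma>2) (Par P Q)"
proof (rule safe_underI)
  fix \<sigma> \<alpha>
  assume ex: "uq0_exclusive (\<Gamma>1 + \<Gamma>2)" and fits: "env_fits \<sigma> \<alpha> (\<Gamma>1 + \<Gamma>2)"
  have ex2: "uq0_exclusive (\<Gamma>2 + \<Gamma>1)" using ex by (simp add: add.commute)
  obtain \<alpha>1 where agree1: "\<forall>c. c \<notin> uq0_names \<Gamma>1 \<longrightarrow> \<alpha>1 c = \<alpha> c" and safe1: "safe \<sigma> \<alpha>1 P"
    using safe_underE[OF assms(3) uq0_exclusive_mono[OF ex] env_fits_mono[OF fits]] by auto
  obtain \<alpha>2 where agree2: "\<forall>c. c \<notin> uq0_names \<Gamma>2 \<longrightarrow> \<alpha>2 c = \<alpha> c" and safe2: "safe \<sigma> \<alpha>2 Q"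
    using safe_underE[OF assms(4) uq0_exclusive_mono[OF ex2] env_fits_mono[OF fits]] by auto
  define \<alpha>' where "\<alpha>' c = (if c \<in> uq0_names \<Gamma>1 then \<alpha>1 c else \<alpha>2 c)" for c
  have "c \<notin> fn Q" if "c \<in> uq0_names \<Gamma>1" for c
    using that uq0_exclusive_disjoint[OF ex2] typed_fn_subjects[OF assms(2)]
    by (auto simp: uq0_names_def)
  moreover have "c \<notin> fn P" if "c \<in> uq0_names \<Gamma>2" for c
    using that uq0_exclusive_disjoint[OF ex] typed_fn_subjects[OF assms(1)]
    by (auto simp: uq0_names_def)
  ultimately have "\<forall>c\<in>fn P. \<alpha>1 c = \<alpha>' c" "\<forall>c\<in>fn Q. \<alpha>2 c = \<alpha>' c"
    using agree1 agree2 unfolding \<alpha>'_def by metis+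
  then have "safe \<sigma> \<alpha>' P" "safe \<sigma> \<alpha>' Q"
    using safe1 safe2 safe_cong[of P \<sigma> \<sigma> \<alpha>1 \<alpha>'] safe_cong[of Q \<sigma> \<sigma> \<alpha>2 \<alpha>'] by simp_all
  moreover have "\<forall>c. c \<notin> uq0_names (\<Gamma>1 + \<Gamma>2) \<longrightarrow> \<alpha>' c = \<alpha> c"
    using agree1 agree2 by (simp add: \<alpha>'_def)
  ultimately show "\<exists>\<alpha>'. (\<forall>c. c \<notin> uq0_names (\<Gamma>1 + \<Gamma>2) \<longrightarrow> \<alpha>' c = \<alpha> c) \<and> safe \<sigma> \<alpha>' (Par P Q)"
    by auto
qed

lemma safe_under_res_top:
  assumes fresh: "SI (Nm c) \<notin> subjects \<Gamma>" and "safe_under (add_mset (SI (Nm c), T) \<Gamma>) P"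
  shows "safe_under \<Gamma> (Res c Top P)"
proof (rule safe_underI)
  fix \<sigma> \<alpha>
  assume "uq0_exclusive \<Gamma>" "env_fits \<sigma> \<alpha> \<Gamma>"
  then obtain \<alpha>'' where agree: "\<forall>d. d \<notin> uq0_names (add_mset (SI (Nm c), T) \<Gamma>) \<longrightarrow>
      \<alpha>'' d = (\<alpha>(c := arity T)) d"
    and safe: "safe (\<sigma>(c \<mapsto> Top)) \<alpha>'' P"
    using safe_underE[OF assms(2) uq0_exclusive_add env_fits_add_fresh] fresh by blast
  define \<alpha>' where "\<alpha>' = \<alpha>''(c := \<alpha> c)"
  have "safe \<sigma> \<alpha>' (Res c Top P)"
    using safe by (auto simp: \<alpha>'_def intro!: exI[of _ "\<alpha>'' c"])
  moreover have "\<forall>d. d \<notin> uq0_names \<Gamma> \<longrightarrow> \<alpha>' d = \<alpha> d"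
    using agree by (auto simp: \<alpha>'_def)
  ultimately show "\<exists>\<alpha>'. (\<forall>d. d \<notin> uq0_names \<Gamma> \<longrightarrow> \<alpha>' d = \<alpha> d) \<and> safe \<sigma> \<alpha>' (Res c Top P)"
    by blast
qed

lemma safe_under_res_bot:
  assumes "SI (Nm c) \<notin> subjects \<Gamma>" "\<Gamma> \<turnstile> P" "safe_under \<Gamma> P"
  shows "safe_under \<Gamma> (Res c Bot P)"
proof -
  have "c \<notin> fn P" using assms(1) typed_fn_subjects[OF assms(2)] by blast
  then have "safe \<sigma> \<alpha> (Res c Bot P) = safe \<sigma> \<alpha> P" for \<sigma> \<alpha>
    by (simp add: safe_update_fresh)
  with assms(3) show ?thesis by (simp add: safe_under_def)
qed

lemma safe_under_uq0_retype:
  assumes "safe_under (add_mset (w, Ch Ts2 (Uq 0)) \<Gamma>) P"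
  shows "safe_under (add_mset (w, Ch Ts1 (Uq 0)) \<Gamma>) P"
proof (cases "\<exists>c. w = SI (Nm c)")
  case True
  then obtain c where w: "w = SI (Nm c)" by blast
  show ?thesis
  proof (rule safe_underI)
    fix \<sigma> \<alpha>
    assume ex: "uq0_exclusive (add_mset (w, Ch Ts1 (Uq 0)) \<Gamma>)"
      and fits: "env_fits \<sigma> \<alpha> (add_mset (w, Ch Ts1 (Uq 0)) \<Gamma>)"
    have fresh: "SI (Nm c) \<notin> subjects \<Gamma>"
      using uq0_exclusiveD[OF ex, of c "Ch Ts1 (Uq 0)"] w by simp
    have top: "\<sigma>(c \<mapsto> Top) = \<sigma>" using fits w by (auto simp: env_fits_def)
    have "uq0_exclusive \<Gamma>" "env_fits \<sigma> \<alpha> \<Gamma>"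
      using uq0_exclusive_mono[of \<Gamma> "{#(w, Ch Ts1 (Uq 0))#}"] ex fits by (auto simp: env_fits_def)
    then have "uq0_exclusive (add_mset (w, Ch Ts2 (Uq 0)) \<Gamma>)"
      and "env_fits \<sigma> (\<alpha>(c := length Ts2)) (add_mset (w, Ch Ts2 (Uq 0)) \<Gamma>)"
      using uq0_exclusive_add[of \<Gamma> w] env_fits_add_fresh[of \<sigma> \<alpha> \<Gamma> c "Ch Ts2 (Uq 0)"] fresh w top
      by auto
    then obtain \<alpha>' where agree: "\<forall>d. d \<notin> uq0_names (add_mset (w, Ch Ts2 (Uq 0)) \<Gamma>) \<longrightarrow>
        \<alpha>' d = (\<alpha>(c := length Ts2)) d" and "safe \<sigma> \<alpha>' P"
      by (rule safe_underE[OF assms])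
    moreover have "\<forall>d. d \<notin> uq0_names (add_mset (w, Ch Ts1 (Uq 0)) \<Gamma>) \<longrightarrow> \<alpha>' d = \<alpha> d"
      using agree w by auto
    ultimately show "\<exists>\<alpha>'. (\<forall>d. d \<notin> uq0_names (add_mset (w, Ch Ts1 (Uq 0)) \<Gamma>) \<longrightarrow>
        \<alpha>' d = \<alpha> d) \<and> safe \<sigma> \<alpha>' P"
      by blast
  qed
next
  case False
  show ?thesis
    by (rule safe_under_mono[OF assms])
      (use False uq0_exclusive_mono[of \<Gamma> "{#(w, Ch Ts1 (Uq 0))#}"] uq0_exclusive_add[of \<Gamma> w]
        in \<open>auto simp: env_fits_def\<close>)
qed

lemma split_same_arity_not_uq0:
  "split T T1 T2 \<Longrightarrow> arity T1 = arity T \<and> arity T2 = arity T \<and> \<not> is_uq0 T1 \<and> \<not> is_uq0 T2"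
  by (induction rule: split.induct) auto

lemma ty_le_same_arity_not_uq0: "ty_le T1 T2 \<Longrightarrow> arity T2 = arity T1 \<and> \<not> is_uq0 T2"
  by (induction rule: ty_le.induct) (auto elim: attr_le.cases)

lemma typed_safe_under: "\<Gamma> \<turnstile> P \<Longrightarrow> safe_under \<Gamma> P"
proof (induction rule: typed.induct)
  case (t_inp u Ts a D xs \<Gamma> P)
  then show ?case by (intro safe_under_of_safe) (auto simp: env_fits_def)
next
  case (t_out u Ts a D vs \<Gamma> P)
  then show ?case by (intro safe_under_of_safe) (auto simp: env_fits_def)
next
  case (t_par \<Gamma>1 P \<Gamma>2 Q)
  then show ?case by (rule safe_under_par)
next
  case (t_rec \<Gamma> X P)
  then show ?case by (simp add: safe_under_rec)
next
  case (t_res_top c \<Gamma> T P)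
  then show ?case by (simp add: safe_under_res_top)
next
  case (t_res_bot c \<Gamma> P)
  then show ?case by (rule safe_under_res_bot)
next
  case (t_split T T1 T2 \<Gamma> w P)
  then show ?case
    using safe_under_replace[of "{#(w, T1), (w, T2)#}" \<Gamma> P w T]
      split_same_arity_not_uq0[OF t_split.hyps(1)]
    by (simp add: add.commute)
next
  case (t_weak \<Gamma> P w T)
  then show ?case by (simp add: safe_under_weaken)
next
  case (t_sub \<Gamma> w T2 P T1)
  then show ?case
    using safe_under_replace[of "{#(w, T2)#}" \<Gamma> P w T1] ty_le_same_arity_not_uq0[OF t_sub.hyps(2)]
    by (simp add: add.commute)
next
  case (t_uq0 \<Gamma> w Ts2 P Ts1)
  then show ?case by (simp add: safe_under_uq0_retype)
qed (auto intro: safe_under_of_safe)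

lemma partial_env_unique:
  assumes "partial_env \<Gamma>" "(w, T) \<in># \<Gamma>" "(w, T') \<in># \<Gamma>"
  shows "T = T'"
proof (rule ccontr)
  assume "T \<noteq> T'"
  obtain \<Delta> where \<Gamma>: "\<Gamma> = add_mset (w, T) \<Delta>" using assms(2) by (metis multi_member_split)
  with assms(3) \<open>T \<noteq> T'\<close> have "(w, T') \<in># {#a \<in># \<Delta>. fst a = w#}" by simp
  then have "0 < size {#a \<in># \<Delta>. fst a = w#}" by (metis empty_iff nonempty_has_size set_mset_empty)
  then have "1 < size {#a \<in># \<Gamma>. fst a = w#}" by (simp add: \<Gamma>)
  with assms(1) show False by (simp add: partial_env_def not_less[symmetric])
qed

lemma partial_env_fits:
  assumes "partial_env \<Gamma>" "\<forall>c. SI (Nm c) \<in> subjects \<Gamma> \<longrightarrow> \<sigma> c = Some Top"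
  shows "env_fits \<sigma> (\<lambda>c. arity (THE T. (SI (Nm c), T) \<in># \<Gamma>)) \<Gamma>"
  unfolding env_fits_def
proof (intro allI impI)
  fix c T
  assume m: "(SI (Nm c), T) \<in># \<Gamma>"
  then have "(THE T. (SI (Nm c), T) \<in># \<Gamma>) = T"
    using partial_env_unique[OF assms(1)] by blast
  with m assms(2) show "\<sigma> c = Some Top \<and> arity (THE T. (SI (Nm c), T) \<in># \<Gamma>) = arity T"
    by (force simp: subjects_def)
qed

theorem mainTheorem2:
  assumes "config \<sigma> P"
    and "ctyped \<Gamma> \<sigma> P"
  shows "\<not> err \<sigma> P"
proof -
  from assms(2) have top: "\<forall>c. SI (Nm c) \<in> subjects \<Gamma> \<longrightarrow> \<sigma> c = Some Top"
    and typed: "\<Gamma> \<turnstile> P" and partial: "partial_env \<Gamma>"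
    by (auto simp: ctyped_def)
  obtain \<alpha> where "safe \<sigma> \<alpha> P"
    using safe_underE[OF typed_safe_under[OF typed] partial_env_uq0_exclusive[OF partial]
      partial_env_fits[OF partial top]] .
  then show ?thesis using err_not_safe by blast
qed

end
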